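(* Let $\nu\in\mathbb C$ with $q^{2\nu+2i}\ne1$ for all integers $i\ge0$. For integers $m\ge0$ define the polynomial in $1/x$ $$r_{m,\nu}(x;q^2)=\sum_{i=0}^{\lfloor m/2\rfloor}\frac{a_i(\nu,m)}{x^{m-2i}}q^{-i(i+1)},\qquad a_i(\nu,m)=q^{-m(m+\nu)}q^{i(3i+\nu-1)}\frac{(-1)^i(q^{2\nu};q^2)_{m-i}(q^2;q^2)_{m-i}}{(q^2;q^2)_i(q^{2\nu};q^2)_i(q^2;q^2)_{m-2i}}.$$ Then $r_{0,\nu}=1$, $r_{1,\nu}(x;q^2)=q^{-(\nu+1)}(1-q^{2\nu})x^{-1}$, and for all $m\ge1$ and $x\ne0$, $$q^{2m}r_{m+1,\nu}(x;q^2)=q^{-(\nu+1)}\frac{1-q^{2(\nu+m)}}{x}r_{m,\nu}(x;q^2)-q^{-(\nu+2)}r_{m-1,\nu}(x;q^2).$$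
   Context: Fix $0<q<1$; $(a;q)_0=1$, $(a;q)_k=\prod_{i=0}^{k-1}(1-aq^i)$. $\lfloor a\rfloor$ is the largest integer $\le a$. *)

theory Defs
  imports "HOL-Analysis.Analysis"
begin

definition qpoch :: "complex \<Rightarrow> complex \<Rightarrow> nat \<Rightarrow> complex" where
  "qpoch a q k = (\<Prod>i<k. 1 - a * q ^ i)"

definition qpow :: "real \<Rightarrow> complex \<Rightarrow> complex" where
  "qpow q z = exp (z * of_real (ln q))"

definition a_coef :: "real \<Rightarrow> complex \<Rightarrow> nat \<Rightarrow> nat \<Rightarrow> complex" where
  "a_coef q \<nu> m i =
     qpow q (- (of_nat m * (of_nat m + \<nu>))) * qpow q (of_nat i * (3 * of_nat i + \<nu> - 1)) *
     ((-1) ^ i * qpoch (qpow q (2 * \<nu>)) (of_real (q^2)) (m - i) * qpoch (of_real (q^2)) (of_real (q^2)) (m - i)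
      / (qpoch (of_real (q^2)) (of_real (q^2)) i * qpoch (qpow q (2 * \<nu>)) (of_real (q^2)) i
         * qpoch (of_real (q^2)) (of_real (q^2)) (m - 2 * i)))"

definition r_poly :: "real \<Rightarrow> complex \<Rightarrow> nat \<Rightarrow> complex \<Rightarrow> complex" where
  "r_poly q \<nu> m x = (\<Sum>i = 0..m div 2. a_coef q \<nu> m i / x ^ (m - 2 * i) * qpow q (- of_nat (i * (i + 1))))"

end

theory Submission
  imports Defs
begin

(* Write r_m(x) = sum_i c(m,i) x^-(m-2i). Comparing coefficients of x^-(m+2-2i), the recurrence
   becomes a three-term relation between c(m+2,i), c(m+1,i) and c(m,i-1). Once the powers of q
   are split off (their exponents match by a quadratic identity in m, i and nu), what remains
   is a contiguous relation for the ratio of q-Pochhammer symbols: with A = q^(2 nu), Q = q^2 and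
   d = m - 2i, the three ratios are a common factor times products of terms 1 - A Q^k, 1 - Q^k,
   and the relation reduces to the polynomial identity
     (1 - A Q^(i+d)) (1 - Q^(i+d+1)) = (1 - A Q^(2i+d+1)) (1 - Q^d) + Q^d (1 - Q^(i+1)) (1 - A Q^i). *)

lemma qpow_add: "qpow q (a + b) = qpow q a * qpow q b"
  by (simp add: qpow_def distrib_right exp_add)

lemma qpow_mult_eq: "a + b = c \<Longrightarrow> qpow q a * qpow q b = qpow q c"
  by (simp flip: qpow_add)

lemma qpow_of_nat: "0 < q \<Longrightarrow> qpow q (of_nat n) = of_real (q ^ n)"
  by (simp add: qpow_def exp_of_nat_mult exp_of_real)

lemma qpoch_0 [simp]: "qpoch a Q 0 = 1"
  by (simp add: qpoch_def)

lemma qpoch_Suc: "qpoch a Q (Suc n) = qpoch a Q n * (1 - a * Q ^ n)"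
  by (simp add: qpoch_def)

lemma qpoch_nonzero: "(\<And>j. j < n \<Longrightarrow> a * Q ^ j \<noteq> 1) \<Longrightarrow> qpoch a Q n \<noteq> 0"
  unfolding qpoch_def by auto

definition parity_poly :: "(nat \<Rightarrow> 'a::field) \<Rightarrow> nat \<Rightarrow> 'a \<Rightarrow> 'a" where
  "parity_poly c m x = (\<Sum>i\<le>m div 2. c i / x ^ (m - 2 * i))"

lemma parity_poly_extend:
  fixes c :: "nat \<Rightarrow> 'a::field"
  assumes "\<And>i. m < 2 * i \<Longrightarrow> c i = 0" and "m div 2 \<le> N" and "x \<noteq> 0"
  shows "(\<Sum>i\<le>N. c i / x ^ (Suc m - 2 * i)) = parity_poly c m x / x"
proof -
  have "(\<Sum>i\<le>N. c i / x ^ (Suc m - 2 * i)) = (\<Sum>i\<le>m div 2. c i / x ^ (Suc m - 2 * i))"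
    using assms(1,2) by (intro sum.mono_neutral_right) auto
  also have "\<dots> = (\<Sum>i\<le>m div 2. c i / x ^ (m - 2 * i) / x)"
    by (intro sum.cong) (auto simp: Suc_diff_le mult.commute)
  finally show ?thesis
    by (simp add: parity_poly_def sum_divide_distrib)
qed

lemma parity_poly_three_term:
  fixes c :: "nat \<Rightarrow> nat \<Rightarrow> 'a::field"
  assumes "x \<noteq> 0"
    and supp: "\<And>i. Suc m < 2 * i \<Longrightarrow> c (Suc m) i = 0"
    and rec0: "\<alpha> * c (m + 2) 0 = \<beta> * c (m + 1) 0"
    and rec: "\<And>i. \<alpha> * c (m + 2) (Suc i) = \<beta> * c (m + 1) (Suc i) - \<gamma> * c m i"
  shows "\<alpha> * parity_poly (c (m + 2)) (m + 2) x
           = \<beta> / x * parity_poly (c (m + 1)) (m + 1) x - \<gamma> * parity_poly (c m) m x"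
proof -
  define N where "N = Suc (m div 2)"
  define c_prev where "c_prev i = (case i of 0 \<Rightarrow> 0 | Suc j \<Rightarrow> c m j)" for i
  have rec': "\<alpha> * c (m + 2) i = \<beta> * c (m + 1) i - \<gamma> * c_prev i" for i
    using rec0 rec by (cases i) (simp_all add: c_prev_def)
  have "(m + 2) div 2 = N"
    by (simp add: N_def)
  then have "\<alpha> * parity_poly (c (m + 2)) (m + 2) x
               = (\<Sum>i\<le>N. \<alpha> * c (m + 2) i / x ^ (m + 2 - 2 * i))"
    by (simp only: parity_poly_def sum_distrib_left times_divide_eq_right)
  also have "\<dots> = (\<Sum>i\<le>N. (\<beta> * c (m + 1) i - \<gamma> * c_prev i) / x ^ (m + 2 - 2 * i))"
    by (simp only: rec')
  also have "\<dots> = \<beta> * (\<Sum>i\<le>N. c (m + 1) i / x ^ (Suc (m + 1) - 2 * i))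
                    - \<gamma> * (\<Sum>i\<le>N. c_prev i / x ^ (m + 2 - 2 * i))"
    by (simp add: diff_divide_distrib sum_subtractf sum_distrib_left)
  also have "(\<Sum>i\<le>N. c (m + 1) i / x ^ (Suc (m + 1) - 2 * i))
               = parity_poly (c (m + 1)) (m + 1) x / x"
    using supp \<open>x \<noteq> 0\<close> by (intro parity_poly_extend) (auto simp: N_def)
  also have "(\<Sum>i\<le>N. c_prev i / x ^ (m + 2 - 2 * i)) = parity_poly (c m) m x"
    unfolding N_def sum.atMost_Suc_shift by (simp add: c_prev_def parity_poly_def)
  finally show ?thesis
    by simp
qed

(* The q-Pochhammer part of a_i(nu,m), extended by 0 beyond i = m div 2 so that the
   recurrences below need no boundary cases. *)
definition poch_coef :: "complex \<Rightarrow> complex \<Rightarrow> nat \<Rightarrow> nat \<Rightarrow> complex" where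
  "poch_coef A Q m i =
     (if 2 * i \<le> m then (-1) ^ i * qpoch A Q (m - i) * qpoch Q Q (m - i)
        / (qpoch Q Q i * qpoch A Q i * qpoch Q Q (m - 2 * i)) else 0)"

lemma poch_coef_eq_0: "m < 2 * i \<Longrightarrow> poch_coef A Q m i = 0"
  by (simp add: poch_coef_def)

lemma poch_coef_0: "qpoch Q Q m \<noteq> 0 \<Longrightarrow> poch_coef A Q m 0 = qpoch A Q m"
  by (simp add: poch_coef_def)

lemma poch_coef_Suc_0:
  assumes "\<And>n. qpoch Q Q n \<noteq> 0"
  shows "poch_coef A Q (Suc m) 0 = (1 - A * Q ^ m) * poch_coef A Q m 0"
  by (simp add: poch_coef_0 [OF assms] qpoch_Suc)

lemma contiguous_identity:
  fixes A Q :: "'a::comm_ring_1"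
  shows "(1 - A * Q ^ (i + d)) * (1 - Q ^ (i + d + 1))
           = (1 - A * Q ^ (2 * i + d + 1)) * (1 - Q ^ d) + Q ^ d * ((1 - Q ^ (i + 1)) * (1 - A * Q ^ i))"
proof -
  have "Q ^ (2 * i + d + 1) = Q ^ i * Q ^ i * Q ^ d * Q" "Q ^ (i + d) = Q ^ i * Q ^ d"
    by (simp_all add: power_add power_mult power2_eq_square mult_ac)
  then show ?thesis
    by (simp add: algebra_simps)
qed

lemma poch_coef_Suc_Suc:
  assumes nA: "\<And>n. qpoch A Q n \<noteq> 0" and nQ: "\<And>n. qpoch Q Q n \<noteq> 0"
  shows "poch_coef A Q (2 * i + d + 2) (Suc i)
           = (1 - A * Q ^ (2 * i + d + 1)) * poch_coef A Q (2 * i + d + 1) (Suc i)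
             - Q ^ d * poch_coef A Q (2 * i + d) i"
proof -
  define F where "F = (-1) ^ i * qpoch A Q (i + d) * qpoch Q Q (i + d)
                        / (qpoch Q Q (Suc i) * qpoch A Q (Suc i) * qpoch Q Q d)"
  have top: "poch_coef A Q (2 * i + d + 2) (Suc i) = - F * ((1 - A * Q ^ (i + d)) * (1 - Q ^ (i + d + 1)))"
  proof -
    have "2 * i + d + 2 - Suc i = Suc (i + d)" "2 * i + d + 2 - 2 * Suc i = d"
      by simp_all
    then show ?thesis
      by (simp add: poch_coef_def F_def qpoch_Suc)
  qed
  have mid: "poch_coef A Q (2 * i + d + 1) (Suc i) = - F * (1 - Q ^ d)"
  proof (cases d)
    case 0
    then show ?thesis
      by (simp add: poch_coef_def)
  next
    case (Suc e)
    have "2 * i + d + 1 - Suc i = i + d" "2 * i + d + 1 - 2 * Suc i = e"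
      using Suc by simp_all
    moreover have "qpoch Q Q e \<noteq> 0"
      using nQ .
    moreover have "1 - Q * Q ^ e \<noteq> 0"
      using nQ [of d] Suc by (auto simp: qpoch_Suc)
    ultimately show ?thesis
      using Suc by (simp add: poch_coef_def F_def qpoch_Suc [of Q Q e] mult.assoc)
  qed
  have low: "poch_coef A Q (2 * i + d) i = F * ((1 - Q ^ (i + 1)) * (1 - A * Q ^ i))"
  proof -
    have "2 * i + d - i = i + d" "2 * i + d - 2 * i = d"
      by simp_all
    moreover have "1 - A * Q ^ i \<noteq> 0" "1 - Q * Q ^ i \<noteq> 0"
      using nA [of "Suc i"] nQ [of "Suc i"] by (auto simp: qpoch_Suc)
    ultimately show ?thesis
      by (simp add: poch_coef_def F_def qpoch_Suc [of Q Q i] qpoch_Suc [of A Q i] mult.assoc)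
  qed
  show ?thesis
    unfolding top mid low contiguous_identity by (simp add: algebra_simps)
qed

lemma of_real_q_power_eq_qpow: "0 < q \<Longrightarrow> of_real (q ^ (2 * k)) = qpow q (2 * of_nat k)"
  using qpow_of_nat [of q "2 * k"] by simp

lemma of_real_q2_power_eq_qpow: "0 < q \<Longrightarrow> of_real (q ^ 2) ^ k = qpow q (2 * of_nat k)"
  by (simp add: of_real_q_power_eq_qpow flip: of_real_power power_mult)

lemma qpoch_q2_nonzero:
  assumes "0 < q" "q < 1"
  shows "qpoch (of_real (q ^ 2)) (of_real (q ^ 2)) n \<noteq> 0"
proof (rule qpoch_nonzero)
  fix j
  have "q ^ 2 * (q ^ 2) ^ j = q ^ (2 * Suc j)"
    by (simp only: power_mult power_Suc)
  also have "\<dots> < 1"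
    using assms by (intro power_less_one_iff [THEN iffD2]) auto
  finally have "q ^ 2 * (q ^ 2) ^ j \<noteq> 1"
    by simp
  then show "of_real (q ^ 2) * of_real (q ^ 2) ^ j \<noteq> (1::complex)"
    by (metis of_real_eq_1_iff of_real_mult of_real_power)
qed

lemma qpoch_qpow_nonzero:
  assumes "0 < q" and "\<And>i::nat. qpow q (2 * \<nu> + 2 * of_nat i) \<noteq> 1"
  shows "qpoch (qpow q (2 * \<nu>)) (of_real (q ^ 2)) n \<noteq> 0"
proof (rule qpoch_nonzero)
  fix j
  show "qpow q (2 * \<nu>) * of_real (q ^ 2) ^ j \<noteq> 1"
    using assms(2) [of j] unfolding of_real_q2_power_eq_qpow [OF assms(1)] qpow_add [symmetric] .
qed

definition r_exponent :: "complex \<Rightarrow> nat \<Rightarrow> nat \<Rightarrow> complex" where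
  "r_exponent \<nu> m i = - (of_nat m * (of_nat m + \<nu>)) + of_nat i * (2 * of_nat i + \<nu> - 2)"

(* r_coef q nu m i = a_i(nu,m) q^(-i(i+1)), the coefficient of x^-(m-2i) in r_m. *)
definition r_coef :: "real \<Rightarrow> complex \<Rightarrow> nat \<Rightarrow> nat \<Rightarrow> complex" where
  "r_coef q \<nu> m i = qpow q (r_exponent \<nu> m i) * poch_coef (qpow q (2 * \<nu>)) (of_real (q ^ 2)) m i"

lemma r_poly_eq_parity_poly: "r_poly q \<nu> m x = parity_poly (r_coef q \<nu> m) m x"
  unfolding r_poly_def parity_poly_def atLeast0AtMost
proof (rule sum.cong)
  fix i assume "i \<in> {..m div 2}"
  then have "2 * i \<le> m"
    by auto
  moreover have "qpow q (- (of_nat m * (of_nat m + \<nu>))) * qpow q (of_nat i * (3 * of_nat i + \<nu> - 1))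
                   * qpow q (- of_nat (i * (i + 1))) = qpow q (r_exponent \<nu> m i)"
    by (simp add: r_exponent_def algebra_simps flip: qpow_add)
  ultimately show "a_coef q \<nu> m i / x ^ (m - 2 * i) * qpow q (- of_nat (i * (i + 1)))
                     = r_coef q \<nu> m i / x ^ (m - 2 * i)"
    by (simp add: a_coef_def r_coef_def poch_coef_def mult_ac)
qed simp

lemma r_coef_Suc_0:
  assumes "0 < q" "q < 1"
  shows "of_real (q ^ (2 * (m + 1))) * r_coef q \<nu> (m + 2) 0
           = qpow q (- (\<nu> + 1)) * (1 - qpow q (2 * (\<nu> + of_nat (m + 1)))) * r_coef q \<nu> (m + 1) 0"
proof -
  define A where "A = qpow q (2 * \<nu>)"
  define Q where "Q = (of_real (q ^ 2) :: complex)"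
  have P: "poch_coef A Q (m + 2) 0 = (1 - A * Q ^ (m + 1)) * poch_coef A Q (m + 1) 0"
    using poch_coef_Suc_0 [of Q] qpoch_q2_nonzero [OF assms] by (simp add: Q_def)
  have "A * Q ^ (m + 1) = qpow q (2 * (\<nu> + of_nat (m + 1)))"
    unfolding A_def Q_def of_real_q2_power_eq_qpow [OF assms(1)]
    by (rule qpow_mult_eq) (simp add: algebra_simps)
  moreover have "of_real (q ^ (2 * (m + 1))) * qpow q (r_exponent \<nu> (m + 2) 0)
                   = qpow q (- (\<nu> + 1)) * qpow q (r_exponent \<nu> (m + 1) 0)"
    unfolding of_real_q_power_eq_qpow [OF assms(1)] qpow_add [symmetric]
    by (simp add: r_exponent_def algebra_simps)
  ultimately show ?thesis
    unfolding r_coef_def A_def [symmetric] Q_def [symmetric] P by (simp add: mult_ac)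
qed

lemma r_coef_Suc_Suc:
  assumes q: "0 < q" "q < 1" and \<nu>: "\<And>i::nat. qpow q (2 * \<nu> + 2 * of_nat i) \<noteq> 1"
  shows "of_real (q ^ (2 * (m + 1))) * r_coef q \<nu> (m + 2) (Suc i)
           = qpow q (- (\<nu> + 1)) * (1 - qpow q (2 * (\<nu> + of_nat (m + 1)))) * r_coef q \<nu> (m + 1) (Suc i)
             - qpow q (- (\<nu> + 2)) * r_coef q \<nu> m i"
proof (cases "2 * i \<le> m")
  case False
  then show ?thesis
    by (simp add: r_coef_def poch_coef_eq_0)
next
  case True
  then obtain d where m: "m = 2 * i + d"
    using le_Suc_ex by blast
  define A where "A = qpow q (2 * \<nu>)"
  define Q where "Q = (of_real (q ^ 2) :: complex)"
  define W where "W = of_real (q ^ (2 * (m + 1))) * qpow q (r_exponent \<nu> (m + 2) (Suc i))"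
  have P: "poch_coef A Q (m + 2) (Suc i)
             = (1 - A * Q ^ (m + 1)) * poch_coef A Q (m + 1) (Suc i) - Q ^ d * poch_coef A Q m i"
    unfolding m A_def Q_def
    using poch_coef_Suc_Suc qpoch_q2_nonzero [OF q] qpoch_qpow_nonzero [OF q(1) \<nu>] by (simp add: add.assoc)
  have AQ: "A * Q ^ (m + 1) = qpow q (2 * (\<nu> + of_nat (m + 1)))"
    unfolding A_def Q_def of_real_q2_power_eq_qpow [OF q(1)]
    by (rule qpow_mult_eq) (simp add: algebra_simps)
  have W1: "W = qpow q (- (\<nu> + 1)) * qpow q (r_exponent \<nu> (m + 1) (Suc i))"
    unfolding W_def of_real_q_power_eq_qpow [OF q(1)] qpow_add [symmetric]
    by (simp add: r_exponent_def algebra_simps)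
  have W2: "W * Q ^ d = qpow q (- (\<nu> + 2)) * qpow q (r_exponent \<nu> m i)"
    unfolding W_def Q_def of_real_q_power_eq_qpow [OF q(1)] of_real_q2_power_eq_qpow [OF q(1)]
      qpow_add [symmetric]
    by (simp add: r_exponent_def m algebra_simps)
  have "of_real (q ^ (2 * (m + 1))) * r_coef q \<nu> (m + 2) (Suc i) = W * poch_coef A Q (m + 2) (Suc i)"
    by (simp add: W_def r_coef_def A_def Q_def mult.assoc)
  also have "\<dots> = (1 - A * Q ^ (m + 1)) * W * poch_coef A Q (m + 1) (Suc i)
                    - W * Q ^ d * poch_coef A Q m i"
    unfolding P by (simp add: algebra_simps)
  also have "\<dots> = qpow q (- (\<nu> + 1)) * (1 - qpow q (2 * (\<nu> + of_nat (m + 1)))) * r_coef q \<nu> (m + 1) (Suc i)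
                    - qpow q (- (\<nu> + 2)) * r_coef q \<nu> m i"
    unfolding W2 unfolding W1 AQ by (simp add: r_coef_def A_def Q_def mult_ac)
  finally show ?thesis .
qed

theorem mainTheorem18:
  fixes q :: real and \<nu> :: complex
  assumes "0 < q" and "q < 1"
    and "\<And>i::nat. qpow q (2 * \<nu> + 2 * of_nat i) \<noteq> 1"
  shows "(\<forall>x. r_poly q \<nu> 0 x = 1)
    \<and> (\<forall>x. r_poly q \<nu> 1 x = qpow q (- (\<nu> + 1)) * (1 - qpow q (2 * \<nu>)) / x)
    \<and> (\<forall>m::nat. \<forall>x::complex. m \<ge> 1 \<longrightarrow> x \<noteq> 0 \<longrightarrow>
         of_real (q ^ (2 * m)) * r_poly q \<nu> (m + 1) x =
           qpow q (- (\<nu> + 1)) * (1 - qpow q (2 * (\<nu> + of_nat m))) / x * r_poly q \<nu> m x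
           - qpow q (- (\<nu> + 2)) * r_poly q \<nu> (m - 1) x)"
proof (intro conjI allI impI)
  fix x :: complex
  show "r_poly q \<nu> 0 x = 1"
    by (simp add: r_poly_eq_parity_poly parity_poly_def r_coef_def r_exponent_def poch_coef_def qpow_def)
  have "poch_coef (qpow q (2 * \<nu>)) (of_real (q ^ 2)) 1 0 = 1 - qpow q (2 * \<nu>)"
    unfolding poch_coef_0 [OF qpoch_q2_nonzero [OF assms(1,2)]] by (simp add: qpoch_def)
  moreover have "r_exponent \<nu> 1 0 = - (\<nu> + 1)"
    by (simp add: r_exponent_def)
  ultimately show "r_poly q \<nu> 1 x = qpow q (- (\<nu> + 1)) * (1 - qpow q (2 * \<nu>)) / x"
    by (simp add: r_poly_eq_parity_poly parity_poly_def r_coef_def)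
next
  fix m :: nat and x :: complex
  assume "1 \<le> m" "x \<noteq> 0"
  then obtain n where m: "m = n + 1"
    by (metis add.commute le_Suc_ex)
  have "of_real (q ^ (2 * (n + 1))) * parity_poly (r_coef q \<nu> (n + 2)) (n + 2) x
          = qpow q (- (\<nu> + 1)) * (1 - qpow q (2 * (\<nu> + of_nat (n + 1)))) / x
              * parity_poly (r_coef q \<nu> (n + 1)) (n + 1) x
            - qpow q (- (\<nu> + 2)) * parity_poly (r_coef q \<nu> n) n x"
    using \<open>x \<noteq> 0\<close> r_coef_Suc_0 [OF assms(1,2)] r_coef_Suc_Suc [OF assms]
    by (intro parity_poly_three_term) (auto simp: r_coef_def poch_coef_eq_0)
  then show "of_real (q ^ (2 * m)) * r_poly q \<nu> (m + 1) x =
           qpow q (- (\<nu> + 1)) * (1 - qpow q (2 * (\<nu> + of_nat m))) / x * r_poly q \<nu> m x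
           - qpow q (- (\<nu> + 2)) * r_poly q \<nu> (m - 1) x"
    by (simp add: m r_poly_eq_parity_poly numeral_2_eq_2)
qed

end
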